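(* Let $k=n/m$ with $n,m$ coprime positive integers, let $q_c$ be an exponential factor all of whose exponents are $>k$, let $r=\mathrm{ram}(q_c)$, let $a,\hat a\in\mathbb C$, and let $b,\hat b$ be exponential factors of slope $<k$. Put $q=q_c+ax^k+b$ and $\hat q=q_c+\hat ax^k+\hat b$. Then $\langle q\rangle\neq\langle\hat q\rangle$ and $f_{q,\hat q}=k$ if and only if one of the following holds: (1) $m$ divides $r$ and $a\neq\hat a$; (2) $m$ does not divide $r$ and either (2a) exactly one of $a,\hat a$ is zero, or (2b) $a\ne0$, $\hat a\ne0$ and $a^N\neq\hat a^N$, where $N=\mathrm{lcm}(r,m)/r$. (Equivalently, in case (2), $a^N\ne\hat a^N$.)
   Context: Exponential factors: finite sums $q=\sum_ka_kx^k$, $a_k\in\mathbb C$, $k\in\mathbb Q_{>0}$; $E(q)$ = set of exponents with $a_k\ne0$; $\mathrm{slope}(q)=\max E(q)$ ($0$ if $q=0$); $\mathrm{ram}(q)$ = least $r\ge1$ with $q\in x^{1/r}\mathbb C[x^{1/r}]$. Galois operator $\sigma(\sum a_kx^k)=\sum a_ke^{-2\pi\sqrt{-1}k}x^k$; Stokes circle $\langle q\rangle=\{\sigma^i(q):i\in\mathbb Z\}$. Truncation $\tau_k(\sum a_{k'}x^{k'})=\sum_{k'\ge k}a_{k'}x^{k'}$. Common part/fission exponent: for $q,\hat q$ in distinct orbits, if some $k'\in E(q)$ has $\langle\tau_{k'}(q)\rangle=\langle\tau_{k'}(\hat q)\rangle$, let $k'$ be the smallest, and put $q_c'=\tau_{k'}(q)$,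 $\hat q_c'=\tau_{k'}(\hat q)$; else $q_c'=\hat q_c'=0$. The fission exponent is $f_{q,\hat q}=\max(\mathrm{slope}(q-q_c'),\mathrm{slope}(\hat q-\hat q_c'))$. *)

theory Defs
  imports Complex_Main
begin

text \<open>An exponential factor \<open>\<Sum>\<^sub>k a\<^sub>k x\<^sup>k\<close> is represented by its coefficient
  function \<open>rat \<Rightarrow> complex\<close> (k \<mapsto> a_k), with finite support contained in the positive rationals.\<close>

type_synonym expfactor = "rat \<Rightarrow> complex"

definition is_expfactor :: "expfactor \<Rightarrow> bool" where
  "is_expfactor q \<longleftrightarrow> finite {k. q k \<noteq> 0} \<and> (\<forall>k. q k \<noteq> 0 \<longrightarrow> k > 0)"

definition E :: "expfactor \<Rightarrow> rat set" where
  "E q = {k. q k \<noteq> 0}"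

definition slope :: "expfactor \<Rightarrow> rat" where
  "slope q = (if E q = {} then 0 else Max (E q))"

definition ram :: "expfactor \<Rightarrow> nat" where
  "ram q = (LEAST r::nat. r \<ge> 1 \<and> (\<forall>k\<in>E q. \<exists>j::int. k * of_nat r = of_int j))"

definition sigma :: "expfactor \<Rightarrow> expfactor" where
  "sigma q = (\<lambda>k. exp (- 2 * of_real pi * \<i> * of_real (of_rat k)) * q k)"

definition sigma_inv :: "expfactor \<Rightarrow> expfactor" where
  "sigma_inv q = (\<lambda>k. exp (2 * of_real pi * \<i> * of_real (of_rat k)) * q k)"

definition sigma_pow :: "int \<Rightarrow> expfactor \<Rightarrow> expfactor" where
  "sigma_pow i = (if i \<ge> 0 then sigma ^^ nat i else sigma_inv ^^ nat (- i))"

definition stokes_circle :: "expfactor \<Rightarrow> expfactor set" where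
  "stokes_circle q = {sigma_pow i q | i. True}"

definition tau :: "rat \<Rightarrow> expfactor \<Rightarrow> expfactor" where
  "tau k q = (\<lambda>k'. if k' \<ge> k then q k' else 0)"

definition common_set :: "expfactor \<Rightarrow> expfactor \<Rightarrow> rat set" where
  "common_set q qh = {k'\<in>E q. stokes_circle (tau k' q) = stokes_circle (tau k' qh)}"

definition fission_exp :: "expfactor \<Rightarrow> expfactor \<Rightarrow> rat" where
  "fission_exp q qh =
     (let qc' = (if common_set q qh = {} then (\<lambda>_. 0) else tau (Min (common_set q qh)) q);
          qhc' = (if common_set q qh = {} then (\<lambda>_. 0) else tau (Min (common_set q qh)) qh)
      in max (slope (\<lambda>x. q x - qc' x)) (slope (\<lambda>x. qh x - qhc' x)))"

end

theory Submission
  imports Defs "HOL-Analysis.Complex_Transcendental"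
begin

text \<open>Above \<open>k\<close> the two factors coincide, so they lie in different Stokes circles with fission
  exponent exactly \<open>k\<close> iff their truncations \<open>\<tau>\<^sub>k q = q\<^sub>c + a x\<^sup>k\<close> and
  \<open>\<tau>\<^sub>k q\<^sub>h = q\<^sub>c + a\<^sub>h x\<^sup>k\<close> lie in different circles. The operator \<open>\<sigma>\<^sup>i\<close>
  multiplies \<open>x\<^sup>e\<close> by \<open>exp(-2\<pi>\<i> i e)\<close>; it fixes \<open>q\<^sub>c\<close> iff \<open>r = ram q\<^sub>c\<close> divides \<open>i\<close>, so the
  truncations share a circle iff \<open>a = \<zeta> a\<^sub>h\<close> with \<open>\<zeta> = exp(-2\<pi>\<i> r j k)\<close>. As \<open>j\<close> varies these
  \<open>\<zeta>\<close> are exactly the \<open>N\<close>-th roots of unity, \<open>N = lcm(r,m)/r\<close>, so the condition is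
  \<open>a\<^sup>N \<noteq> a\<^sub>h\<^sup>N\<close>; for \<open>N = 1\<close>, i.e. \<open>m | r\<close>, it reads \<open>a \<noteq> a\<^sub>h\<close>.\<close>

definition turn :: "rat \<Rightarrow> complex" where
  "turn x = exp (- 2 * of_real pi * \<i> * of_real (of_rat x))"

lemma turn_0 [simp]: "turn 0 = 1"
  by (simp add: turn_def)

lemma turn_add: "turn (x + y) = turn x * turn y"
  by (simp add: turn_def of_rat_add exp_add[symmetric] algebra_simps)

lemma turn_diff: "turn (x - y) = turn x * turn (- y)"
  using turn_add[of x "- y"] by simp

lemma turn_nonzero: "turn x \<noteq> 0"
  by (simp add: turn_def)

lemma turn_power: "turn x ^ n = turn (of_nat n * x)"
proof (induction n)
  case (Suc n)
  then show ?case by (simp add: turn_add[symmetric] distrib_right add.commute)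
qed simp

lemma turn_eq_1_iff: "turn x = 1 \<longleftrightarrow> x \<in> \<int>"
proof -
  have "turn x = 1 \<longleftrightarrow> (\<exists>n::int. - 2 * pi * of_rat x = of_int (2 * n) * pi)"
    using exp_eq_1[of "- 2 * of_real pi * \<i> * of_real (of_rat x)"] by (simp add: turn_def)
  also have "\<dots> \<longleftrightarrow> (\<exists>n::int. of_rat x = (of_int (- n) :: real))"
  proof (intro ex_cong1)
    fix n :: int
    have "- 2 * pi * of_rat x = of_int (2 * n) * pi \<longleftrightarrow> 2 * pi * (of_rat x + of_int n) = 0"
      by (auto simp: algebra_simps)
    also have "\<dots> \<longleftrightarrow> of_rat x = (of_int (- n) :: real)"
      by (auto simp: add_eq_0_iff)
    finally show "- 2 * pi * of_rat x = of_int (2 * n) * pi \<longleftrightarrow> of_rat x = (of_int (- n) :: real)" .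
  qed
  also have "\<dots> \<longleftrightarrow> (\<exists>n::int. x = of_int (- n))"
    by (metis of_rat_eq_iff of_rat_of_int_eq)
  also have "\<dots> \<longleftrightarrow> x \<in> \<int>"
    by (metis Ints_cases Ints_of_int minus_minus)
  finally show ?thesis .
qed

lemma turn_eq_iff: "turn x = turn y \<longleftrightarrow> x - y \<in> \<int>"
  using turn_add[of "x - y" y] turn_nonzero[of y] turn_eq_1_iff[of "x - y"] by auto

lemma sigma_eq: "sigma q = (\<lambda>e. turn e * q e)"
  by (simp add: sigma_def turn_def)

lemma sigma_inv_eq: "sigma_inv q = (\<lambda>e. turn (- e) * q e)"
  by (simp add: sigma_inv_def turn_def of_rat_minus)

lemma sigma_pow_eq: "sigma_pow i q = (\<lambda>e. turn (of_int i * e) * q e)"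
proof -
  have "(sigma ^^ n) q = (\<lambda>e. turn (of_nat n * e) * q e)"
    and "(sigma_inv ^^ n) q = (\<lambda>e. turn (of_nat n * - e) * q e)" for n
    by (induction n) (simp_all add: sigma_eq sigma_inv_eq turn_add turn_diff ring_distribs ac_simps)
  then show ?thesis by (simp add: sigma_pow_def)
qed

lemma sigma_pow_0: "sigma_pow 0 q = q"
  by (simp add: sigma_pow_eq)

lemma sigma_pow_sigma_pow: "sigma_pow i (sigma_pow j q) = sigma_pow (i + j) q"
  by (simp add: sigma_pow_eq turn_add algebra_simps)

lemma stokes_circle_eq_iff: "stokes_circle x = stokes_circle y \<longleftrightarrow> (\<exists>i. x = sigma_pow i y)"
proof
  assume "stokes_circle x = stokes_circle y"
  moreover have "x \<in> stokes_circle x"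
    unfolding stokes_circle_def by (metis (mono_tags) mem_Collect_eq sigma_pow_0)
  ultimately show "\<exists>i. x = sigma_pow i y"
    by (auto simp: stokes_circle_def)
next
  assume "\<exists>i. x = sigma_pow i y"
  then obtain i where "x = sigma_pow i y" ..
  then have "sigma_pow j x = sigma_pow (j + i) y" and "sigma_pow j y = sigma_pow (j - i) x" for j
    by (simp_all add: sigma_pow_sigma_pow)
  then show "stokes_circle x = stokes_circle y"
    unfolding stokes_circle_def by (metis (no_types, lifting))
qed

lemma tau_sigma_pow: "tau c (sigma_pow i q) = sigma_pow i (tau c q)"
  by (simp add: tau_def sigma_pow_eq fun_eq_iff)

lemma stokes_circle_tau_eq:
  "stokes_circle x = stokes_circle y \<Longrightarrow> stokes_circle (tau c x) = stokes_circle (tau c y)"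
  by (metis stokes_circle_eq_iff tau_sigma_pow)

lemma stokes_circle_tau_mono:
  assumes "stokes_circle (tau c x) = stokes_circle (tau c y)" and "c \<le> c'"
  shows "stokes_circle (tau c' x) = stokes_circle (tau c' y)"
proof -
  have "tau c' (tau c q) = tau c' q" for q
    using \<open>c \<le> c'\<close> by (auto simp: tau_def fun_eq_iff)
  then show ?thesis
    using stokes_circle_tau_eq[OF assms(1), of c'] by simp
qed

lemma mem_common_set_above:
  assumes "\<forall>x>k. q x = qh x" and "k < x" and "q x \<noteq> 0"
  shows "x \<in> common_set q qh"
proof -
  have "tau x q = tau x qh"
    using assms(1,2) by (auto simp: tau_def fun_eq_iff)
  then show ?thesis
    using assms(3) by (simp add: common_set_def E_def)
qed

lemma stokes_circle_tau_eq_iff_common_set: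
  assumes agree: "\<forall>x>k. q x = qh x"
  shows "stokes_circle (tau k q) = stokes_circle (tau k qh)
    \<longleftrightarrow> (\<exists>c\<in>common_set q qh. c \<le> k) \<or> (q k = 0 \<and> qh k = 0)"
proof
  assume eq: "stokes_circle (tau k q) = stokes_circle (tau k qh)"
  show "(\<exists>c\<in>common_set q qh. c \<le> k) \<or> (q k = 0 \<and> qh k = 0)"
  proof (cases "q k = 0")
    case True
    obtain i where "tau k q = sigma_pow i (tau k qh)"
      using eq stokes_circle_eq_iff by blast
    then have "q k = turn (of_int i * k) * qh k"
      by (simp add: fun_eq_iff sigma_pow_eq tau_def split: if_splits)
    then show ?thesis
      using True turn_nonzero by simp
  next
    case False
    then have "k \<in> common_set q qh"
      using eq by (simp add: common_set_def E_def)
    then show ?thesis by blast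
  qed
next
  assume "(\<exists>c\<in>common_set q qh. c \<le> k) \<or> (q k = 0 \<and> qh k = 0)"
  then show "stokes_circle (tau k q) = stokes_circle (tau k qh)"
  proof
    assume "\<exists>c\<in>common_set q qh. c \<le> k"
    then obtain c where "stokes_circle (tau c q) = stokes_circle (tau c qh)" and "c \<le> k"
      by (auto simp: common_set_def)
    then show ?thesis
      by (rule stokes_circle_tau_mono)
  next
    assume "q k = 0 \<and> qh k = 0"
    then have "tau k q = tau k qh"
      using agree by (auto simp: tau_def fun_eq_iff order_le_less)
    then show ?thesis by simp
  qed
qed

lemma slope_of_support_le:
  assumes "finite (E f)" and "\<forall>x. f x \<noteq> 0 \<longrightarrow> x \<le> k" and "0 < k"
  shows "slope f \<le> k" and "slope f = k \<longleftrightarrow> f k \<noteq> 0"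
proof -
  have "slope f \<le> k \<and> (slope f = k \<longleftrightarrow> f k \<noteq> 0)"
  proof (cases "E f = {}")
    case True
    then show ?thesis using assms(3) by (simp add: slope_def E_def)
  next
    case False
    have max_in: "Max (E f) \<in> E f"
      using assms(1) False by (rule Max_in)
    then have "Max (E f) \<le> k"
      using assms(2) by (simp add: E_def)
    moreover have "Max (E f) = k \<longleftrightarrow> k \<in> E f"
      using max_in Max_ge[OF assms(1)] \<open>Max (E f) \<le> k\<close> by (auto intro: antisym simp del: Max_ge_iff)
    ultimately show ?thesis using False by (auto simp: slope_def E_def)
  qed
  then show "slope f \<le> k" and "slope f = k \<longleftrightarrow> f k \<noteq> 0" by auto
qed

lemma coeff_eq_0_above_slope:
  assumes "finite (E f)" and "slope f < x"
  shows "f x = 0"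
proof (rule ccontr)
  assume "f x \<noteq> 0"
  then have "x \<in> E f"
    by (simp add: E_def)
  then have "x \<le> slope f"
    using assms(1) by (auto simp: slope_def)
  then show False
    using assms(2) by simp
qed

definition residual :: "rat set \<Rightarrow> expfactor \<Rightarrow> expfactor" where
  "residual C q = (\<lambda>x. q x - (if C = {} then (\<lambda>_. 0) else tau (Min C) q) x)"

lemma fission_exp_eq_max_slope_residual:
  "fission_exp q qh
    = max (slope (residual (common_set q qh) q)) (slope (residual (common_set q qh) qh))"
  by (simp add: fission_exp_def residual_def Let_def)

lemma residual_eq:
  assumes "finite C"
  shows "residual C q x = (if \<exists>c\<in>C. c \<le> x then 0 else q x)"
  using assms by (auto simp: residual_def tau_def Min_le_iff)

lemma slope_residual:
  assumes "finite (E q)" and "finite C" and "0 < k" and "\<forall>x>k. q x \<noteq> 0 \<longrightarrow> x \<in> C"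
  shows "slope (residual C q) \<le> k"
    and "slope (residual C q) = k \<longleftrightarrow> \<not> (\<exists>c\<in>C. c \<le> k) \<and> q k \<noteq> 0"
proof -
  have "E (residual C q) \<subseteq> E q"
    using assms(2) by (auto simp: E_def residual_eq)
  moreover have "\<forall>x. residual C q x \<noteq> 0 \<longrightarrow> x \<le> k"
    using assms(2,4) by (metis residual_eq order_refl not_le)
  ultimately show "slope (residual C q) \<le> k"
    and "slope (residual C q) = k \<longleftrightarrow> \<not> (\<exists>c\<in>C. c \<le> k) \<and> q k \<noteq> 0"
    using slope_of_support_le[OF finite_subset[OF _ assms(1)] _ assms(3)] assms(2)
    by (auto simp: residual_eq)
qed

lemma fission_exp_eq_iff:
  assumes "finite (E q)" and "finite (E qh)" and "0 < k" and agree: "\<forall>x>k. q x = qh x"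
  shows "fission_exp q qh = k
    \<longleftrightarrow> \<not> (\<exists>c\<in>common_set q qh. c \<le> k) \<and> (q k \<noteq> 0 \<or> qh k \<noteq> 0)"
proof -
  let ?C = "common_set q qh"
  have "finite ?C"
    using assms(1) by (rule finite_subset[rotated]) (auto simp: common_set_def)
  moreover have "\<forall>x>k. q x \<noteq> 0 \<longrightarrow> x \<in> ?C" and "\<forall>x>k. qh x \<noteq> 0 \<longrightarrow> x \<in> ?C"
    using agree mem_common_set_above[OF agree] by auto
  ultimately show ?thesis
    using slope_residual[OF assms(1) _ assms(3), of ?C] slope_residual[OF assms(2) _ assms(3), of ?C]
    unfolding fission_exp_eq_max_slope_residual by (auto simp: max_def)
qed

lemma stokes_circle_ne_and_fission_exp_eq_iff:
  assumes "finite (E q)" and "finite (E qh)" and "0 < k" and agree: "\<forall>x>k. q x = qh x"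
  shows "(stokes_circle q \<noteq> stokes_circle qh \<and> fission_exp q qh = k)
    \<longleftrightarrow> stokes_circle (tau k q) \<noteq> stokes_circle (tau k qh)"
  using fission_exp_eq_iff[OF assms] stokes_circle_tau_eq_iff_common_set[OF agree]
    stokes_circle_tau_eq[of q qh k] by blast

lemma finite_rat_set_common_denominator:
  assumes "finite (A :: rat set)"
  shows "\<exists>r::nat. r \<ge> 1 \<and> (\<forall>x\<in>A. \<exists>j::int. x * of_nat r = of_int j)"
  using assms
proof (induction A rule: finite_induct)
  case (insert x A)
  obtain r :: nat where r: "r \<ge> 1" "\<forall>y\<in>A. \<exists>j::int. y * of_nat r = of_int j"
    using insert.IH by blast
  obtain p d where x: "x = of_int p / of_int d" and d: "d > 0"
    by (metis prod.exhaust quotient_of_denom_pos quotient_of_div)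
  have "\<exists>j::int. y * of_nat (r * nat d) = of_int j" if y: "y \<in> insert x A" for y
  proof (cases "y = x")
    case True
    then have "y * of_nat (r * nat d) = of_int (p * int r)"
      using d by (simp add: x)
    then show ?thesis by blast
  next
    case False
    then obtain j where "y * of_nat r = of_int j"
      using r(2) y by auto
    then have "y * of_nat (r * nat d) = of_int (j * d)"
      using d by (simp flip: mult.assoc)
    then show ?thesis by blast
  qed
  moreover have "r * nat d \<ge> 1"
    using r(1) d by simp
  ultimately show ?case by blast
qed (auto intro: exI[of _ 1])

lemma ram_clears_denominators:
  assumes "finite (E q)"
  shows "ram q \<ge> 1" and "\<forall>x\<in>E q. \<exists>j::int. x * of_nat (ram q) = of_int j"
proof -
  obtain r :: nat where "r \<ge> 1 \<and> (\<forall>x\<in>E q. \<exists>j::int. x * of_nat r = of_int j)"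
    using finite_rat_set_common_denominator[OF assms] by blast
  then have "ram q \<ge> 1 \<and> (\<forall>x\<in>E q. \<exists>j::int. x * of_nat (ram q) = of_int j)"
    unfolding ram_def by (rule LeastI)
  then show "ram q \<ge> 1" and "\<forall>x\<in>E q. \<exists>j::int. x * of_nat (ram q) = of_int j"
    by auto
qed

lemma ram_dvd_iff:
  assumes "finite (E q)"
  shows "(\<forall>x\<in>E q. of_int i * x \<in> \<int>) \<longleftrightarrow> int (ram q) dvd i"
proof
  assume "int (ram q) dvd i"
  then obtain t where i: "i = int (ram q) * t" ..
  show "\<forall>x\<in>E q. of_int i * x \<in> \<int>"
  proof
    fix x assume "x \<in> E q"
    then obtain j where "x * of_nat (ram q) = of_int j"
      using ram_clears_denominators(2)[OF assms] by blast
    then have "of_int i * x = of_int (j * t)"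
      by (simp add: i algebra_simps)
    then show "of_int i * x \<in> \<int>" by simp
  qed
next
  assume H: "\<forall>x\<in>E q. of_int i * x \<in> \<int>"
  define r where "r = ram q"
  define i' where "i' = i mod int r"
  have r: "r \<ge> 1"
    using ram_clears_denominators(1)[OF assms] by (simp add: r_def)
  then have i': "0 \<le> i'" "i' < int r"
    by (simp_all add: i'_def)
  have "\<exists>j::int. x * of_nat (nat i') = of_int j" if x: "x \<in> E q" for x
  proof -
    obtain j1 where j1: "of_int i * x = of_int j1"
      using H x by (meson Ints_cases)
    obtain j2 where j2: "x * of_nat r = of_int j2"
      using ram_clears_denominators(2)[OF assms] x by (auto simp: r_def)
    have "i' = i - int r * (i div int r)"
      by (simp add: i'_def minus_mult_div_eq_mod)
    then have i'_rat: "(of_int i' :: rat) = of_int i - of_nat r * of_int (i div int r)"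
      by simp
    have "x * of_nat (nat i') = x * of_int i'"
      using i'(1) by simp
    also have "\<dots> = of_int i * x - (x * of_nat r) * of_int (i div int r)"
      unfolding i'_rat by (simp add: algebra_simps)
    also have "\<dots> = of_int (j1 - j2 * (i div int r))"
      by (simp add: j1 j2)
    finally show ?thesis by blast
  qed
  then have "i' \<noteq> 0 \<Longrightarrow> r \<le> nat i'"
    using i'(1) unfolding r_def ram_def by (intro Least_le) auto
  then have "i' = 0"
    using i' by linarith
  then show "int (ram q) dvd i"
    by (simp add: i'_def r_def dvd_eq_mod_eq_0)
qed

lemma stokes_circle_add_monomial_eq_iff:
  assumes "finite (E p)" and "p k = 0"
  shows "stokes_circle (\<lambda>e. p e + (if e = k then a else 0))
      = stokes_circle (\<lambda>e. p e + (if e = k then ah else 0))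
    \<longleftrightarrow> (\<exists>j::int. a = turn (of_int (int (ram p) * j) * k) * ah)"
proof -
  have "stokes_circle (\<lambda>e. p e + (if e = k then a else 0))
      = stokes_circle (\<lambda>e. p e + (if e = k then ah else 0))
    \<longleftrightarrow> (\<exists>i. \<forall>e. p e + (if e = k then a else 0)
                 = turn (of_int i * e) * (p e + (if e = k then ah else 0)))"
    unfolding stokes_circle_eq_iff sigma_pow_eq fun_eq_iff ..
  also have "\<dots> \<longleftrightarrow> (\<exists>i. (\<forall>e\<in>E p. turn (of_int i * e) = 1) \<and> a = turn (of_int i * k) * ah)"
  proof (intro ex_cong1)
    fix i
    let ?w = "\<lambda>e. turn (of_int i * e)"
    have "p e = ?w e * p e \<longleftrightarrow> (e \<in> E p \<longrightarrow> ?w e = 1)" for e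
      by (auto simp: E_def)
    then show "(\<forall>e. p e + (if e = k then a else 0) = ?w e * (p e + (if e = k then ah else 0)))
      \<longleftrightarrow> (\<forall>e\<in>E p. ?w e = 1) \<and> a = ?w k * ah"
      using assms(2) by (auto simp: E_def)
  qed
  also have "\<dots> \<longleftrightarrow> (\<exists>i. int (ram p) dvd i \<and> a = turn (of_int i * k) * ah)"
    by (simp add: turn_eq_1_iff ram_dvd_iff[OF assms(1)])
  also have "\<dots> \<longleftrightarrow> (\<exists>j::int. a = turn (of_int (int (ram p) * j) * k) * ah)"
    by (auto simp: dvd_def)
  finally show ?thesis .
qed

lemma power_eq_1_iff_turn:
  fixes u N :: nat and \<omega> :: complex
  assumes "0 < N" and "coprime u N"
  shows "\<omega> ^ N = 1 \<longleftrightarrow> (\<exists>j::int. \<omega> = turn (of_int j * of_nat u / of_nat N))"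
proof
  assume "\<omega> ^ N = 1"
  then obtain t :: nat where "\<omega> = exp (2 * of_real pi * \<i> * of_nat t / of_nat N)"
    using complex_roots_unity[of N] assms(1) by auto
  then have \<omega>: "\<omega> = turn (- of_nat t / of_nat N)"
    by (simp add: turn_def of_rat_divide of_rat_minus)
  have "gcd (int u) (int N) = 1"
    using assms(2) by (simp add: gcd_int_int_eq)
  then obtain s l :: int where sl: "s * int u + l * int N = 1"
    using bezout_int[of "int u" "int N"] by metis
  have "(of_int (- int t * s) * of_nat u / of_nat N - (- of_nat t / of_nat N) :: rat)
      = of_nat t * (1 - of_int s * of_nat u) / of_nat N"
    using assms(1) by (simp add: field_simps)
  also have "\<dots> = of_int (int t * l)"
  proof -
    have "(of_int s * of_nat u + of_int l * of_nat N :: rat) = 1"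
      using arg_cong[OF sl, of "of_int :: int \<Rightarrow> rat"] by simp
    then have "1 - of_int s * of_nat u = (of_int l * of_nat N :: rat)"
      by linarith
    then show ?thesis
      using assms(1) by simp
  qed
  finally have "turn (of_int (- int t * s) * of_nat u / of_nat N) = \<omega>"
    unfolding \<omega> turn_eq_iff by (metis Ints_of_int)
  then show "\<exists>j::int. \<omega> = turn (of_int j * of_nat u / of_nat N)"
    by metis
next
  assume "\<exists>j::int. \<omega> = turn (of_int j * of_nat u / of_nat N)"
  then obtain j :: int where "\<omega> = turn (of_int j * of_nat u / of_nat N)" ..
  then have "\<omega> ^ N = turn (of_int (j * int u))"
    using assms(1) by (simp add: turn_power)
  then show "\<omega> ^ N = 1"
    by (simp add: turn_eq_1_iff)
qed

lemma lcm_div_left_eq: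
  fixes r m :: nat
  assumes "0 < r"
  shows "lcm r m div r = m div gcd r m"
proof -
  have "lcm r m = r * (m div gcd r m)"
    by (simp add: lcm_nat_def div_mult_swap)
  then show ?thesis
    using assms by simp
qed

lemma lcm_div_eq_1_iff_dvd:
  fixes r m :: nat
  assumes "0 < r"
  shows "lcm r m div r = 1 \<longleftrightarrow> m dvd r"
  using assms by (metis div_self dvd_div_eq_cancel dvd_lcm1 dvd_refl lcm_proj1_iff_nat less_not_refl)

lemma exists_turn_rotation_iff_power_eq:
  fixes n m r :: nat and a ah :: complex
  assumes "0 < m" and "0 < r" and "coprime n m"
  shows "(\<exists>j::int. a = turn (of_int (int r * j) * (of_nat n / of_nat m)) * ah)
    \<longleftrightarrow> a ^ (lcm r m div r) = ah ^ (lcm r m div r)"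
proof -
  define g where "g = gcd r m"
  define N where "N = m div g"
  define u where "u = r div g * n"
  have g: "0 < g" "g dvd r" "g dvd m"
    using assms(2) by (simp_all add: g_def)
  have N: "lcm r m div r = N" and "0 < N"
    using assms(1,2) by (simp_all add: N_def g_def lcm_div_left_eq div_greater_zero_iff)
  have "N dvd m"
    using g(3) unfolding N_def by (metis dvd_div_mult_self dvd_triv_left)
  then have "coprime (r div g) N" and "coprime n N"
    using div_gcd_coprime[of r m] assms(2,3) coprime_divisors[of n n N m]
    by (simp_all add: N_def g_def)
  then have cop: "coprime u N"
    by (simp add: u_def)
  have rot: "of_int (int r * j) * (of_nat n / of_nat m) = of_int j * of_nat u / (of_nat N :: rat)"
    for j
  proof -
    have "(of_nat r :: rat) = of_nat (r div g) * of_nat g" and "(of_nat m :: rat) = of_nat N * of_nat g"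
      using g by (simp_all add: N_def flip: of_nat_mult)
    then show ?thesis
      using g \<open>0 < N\<close> by (simp add: u_def field_simps)
  qed
  show ?thesis
  proof (cases "ah = 0")
    case True
    then show ?thesis
      using \<open>0 < N\<close> by (simp add: N power_0_left)
  next
    case False
    have "(\<exists>j::int. a = turn (of_int (int r * j) * (of_nat n / of_nat m)) * ah)
        \<longleftrightarrow> (\<exists>j::int. a / ah = turn (of_int j * of_nat u / of_nat N))"
      unfolding rot using False by (simp add: field_simps)
    also have "\<dots> \<longleftrightarrow> (a / ah) ^ N = 1"
      using power_eq_1_iff_turn[OF \<open>0 < N\<close> cop] by simp
    also have "\<dots> \<longleftrightarrow> a ^ N = ah ^ N"
      using False by (simp add: power_divide)
    finally show ?thesis
      by (simp add: N)
  qed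
qed

theorem mainTheorem6:
  fixes n m :: nat and k :: rat and qc b bh :: expfactor and a ah :: complex
  assumes "n > 0" and "m > 0" and "coprime n m"
    and "k = of_nat n / of_nat m"
    and "is_expfactor qc" and "\<forall>e\<in>E qc. e > k"
    and "is_expfactor b" and "is_expfactor bh"
    and "slope b < k" and "slope bh < k"
  shows "(stokes_circle (\<lambda>e. qc e + (if e = k then a else 0) + b e)
            \<noteq> stokes_circle (\<lambda>e. qc e + (if e = k then ah else 0) + bh e)
          \<and> fission_exp (\<lambda>e. qc e + (if e = k then a else 0) + b e)
                        (\<lambda>e. qc e + (if e = k then ah else 0) + bh e) = k)
     \<longleftrightarrow> ((m dvd ram qc \<and> a \<noteq> ah)
          \<or> (\<not> m dvd ram qc \<and>
              ((a = 0 \<and> ah \<noteq> 0) \<or> (a \<noteq> 0 \<and> ah = 0)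
               \<or> (a \<noteq> 0 \<and> ah \<noteq> 0 \<and>
                  a ^ (lcm (ram qc) m div ram qc) \<noteq> ah ^ (lcm (ram qc) m div ram qc)))))"
proof -
  define q where "q = (\<lambda>e. qc e + (if e = k then a else 0) + b e)"
  define qh where "qh = (\<lambda>e. qc e + (if e = k then ah else 0) + bh e)"
  define r where "r = ram qc"
  define N where "N = lcm r m div r"
  have "0 < k"
    using assms(1,2,4) by simp
  have fin: "finite (E qc)" "finite (E b)" "finite (E bh)"
    using assms(5,7,8) by (simp_all add: is_expfactor_def E_def)
  have qc_low: "qc x = 0" if "x \<le> k" for x
    using assms(6) that by (force simp: E_def)
  have b_high: "b x = 0" "bh x = 0" if "k \<le> x" for x
    using coeff_eq_0_above_slope fin(2,3) assms(9,10) that by fastforce+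
  have tau_k: "tau k q = (\<lambda>e. qc e + (if e = k then a else 0))"
    "tau k qh = (\<lambda>e. qc e + (if e = k then ah else 0))"
    using qc_low b_high by (auto simp: q_def qh_def tau_def fun_eq_iff)
  have agree: "\<forall>x>k. q x = qh x"
    using b_high by (simp add: q_def qh_def)
  have "E q \<subseteq> insert k (E qc \<union> E b)" and "E qh \<subseteq> insert k (E qc \<union> E bh)"
    by (auto simp: q_def qh_def E_def)
  then have fin_q: "finite (E q)" "finite (E qh)"
    using fin by (auto intro: finite_subset)
  have r: "0 < r"
    using ram_clears_denominators(1)[OF fin(1)] by (simp add: r_def)
  then have "0 < N"
    using assms(2) by (simp add: N_def lcm_div_left_eq div_greater_zero_iff)
  have "(stokes_circle q \<noteq> stokes_circle qh \<and> fission_exp q qh = k)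
      \<longleftrightarrow> stokes_circle (tau k q) \<noteq> stokes_circle (tau k qh)"
    using stokes_circle_ne_and_fission_exp_eq_iff[OF fin_q \<open>0 < k\<close> agree] .
  also have "\<dots> \<longleftrightarrow> a ^ N \<noteq> ah ^ N"
    unfolding tau_k stokes_circle_add_monomial_eq_iff[OF fin(1) qc_low[OF order_refl]]
    using exists_turn_rotation_iff_power_eq[OF assms(2) r assms(3)]
    by (simp add: assms(4) r_def N_def)
  also have "\<dots> \<longleftrightarrow> (m dvd r \<and> a \<noteq> ah) \<or> (\<not> m dvd r \<and>
      ((a = 0 \<and> ah \<noteq> 0) \<or> (a \<noteq> 0 \<and> ah = 0) \<or> (a \<noteq> 0 \<and> ah \<noteq> 0 \<and> a ^ N \<noteq> ah ^ N)))"
    using lcm_div_eq_1_iff_dvd[OF r, of m] \<open>0 < N\<close> by (auto simp: N_def power_0_left)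
  finally show ?thesis
    unfolding q_def qh_def r_def N_def .
qed

end
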